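(* The Top-$t$ Truncated Harmonic rule has utilitarian distortion $O\!\left(\frac{m\sqrt m\,H_t}{t}\right)$.
   Context: Setting: $n$ agents, $m$ alternatives, $1\le t\le m$; each agent has an underlying strict ranking but only her ordered top-$t$ list is reported (top-$t$ profile $\vec\sigma_t$); $r_i(Y)\in\{1,\dots,t\}$ is the reported rank of $Y$ when $Y$ is among $i$'s top $t$; $H_t=\sum_{k=1}^t1/k$. For the reported information, $Y\succ_i\hat X$ holds when $Y$ is among $i$'s top $t$ and either $\hat X$ is not among them or $r_i(Y)<r_i(\hat X)$. Utilitarian framework: $u_i:\mathcal A\to\mathbb R_{\ge0}$ with $\sum_Xu_i(X)=1$; $\vec u$ is consistent with $\vec\sigma_t$ if for some full ranking profile whose top-$t$ prefixes agree with $\vec\sigma_t$, $X\succ_iY\Rightarrow u_i(X)\ge u_i(Y)$. $\mathrm{SW}(X,\vec u)=\sum_iu_i(X)$; utilitarian distortion of $f$: $\sup_{\vec\sigma_t}\sup_{\vec u}\max_X\mathrm{SW}(X,\vec u)/\mathbb E_{X\sim f(\vec\sigma_t)}[\mathrm{SW}(X,\vec u)]$. Top-$t$ Truncated Harmonic rule: fix a deterministic voting rule $g$ on top-$t$ profiles with metric distortion at most $6m/t+1$ (such a rule exists), and let $\hat X=g(\vec\sigma_t)$. Pick an agent $i$ uniformly at random and output $Y$ with probability $p(i,Y)=\frac{1}{2H_t r_i(Y)}$ if $Y\succ_i\hat X$, $p(i,\hat X)=1-\sum_{Y\succ_i\hat X}p(i,Y)$, and $p(i,Y)=0$ otherwise.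 *)

theory Defs
  imports "HOL-Analysis.Analysis"
begin

text \<open>Agents are 0..<n, alternatives are 0..<m (natural numbers).
  A ranking is a list of alternatives, most preferred first.\<close>

text \<open>0-based position of an element in a list (length l if absent).\<close>
fun index :: "nat list \<Rightarrow> nat \<Rightarrow> nat" where
  "index [] x = 0"
| "index (y # ys) x = (if y = x then 0 else Suc (index ys x))"

definition full_ranking :: "nat \<Rightarrow> nat list \<Rightarrow> bool" where
  "full_ranking m l \<longleftrightarrow> distinct l \<and> set l = {0..<m}"

definition top_list :: "nat \<Rightarrow> nat \<Rightarrow> nat list \<Rightarrow> bool" where
  "top_list m t l \<longleftrightarrow> distinct l \<and> length l = t \<and> set l \<subseteq> {0..<m}"

definition top_profile :: "nat \<Rightarrow> nat \<Rightarrow> nat \<Rightarrow> (nat \<Rightarrow> nat list) \<Rightarrow> bool" where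
  "top_profile n m t \<sigma> \<longleftrightarrow> (\<forall>i<n. top_list m t (\<sigma> i))"

definition extends_profile :: "nat \<Rightarrow> nat \<Rightarrow> nat \<Rightarrow> (nat \<Rightarrow> nat list) \<Rightarrow> (nat \<Rightarrow> nat list) \<Rightarrow> bool" where
  "extends_profile n m t \<sigma> \<rho> \<longleftrightarrow> (\<forall>i<n. full_ranking m (\<rho> i) \<and> take t (\<rho> i) = \<sigma> i)"

definition prefers :: "nat list \<Rightarrow> nat \<Rightarrow> nat \<Rightarrow> bool" where
  "prefers l X Y \<longleftrightarrow> X \<in> set l \<and> Y \<in> set l \<and> index l X < index l Y"

text \<open>Reported rank r_i(Y) in {1..t} (meaningful when Y is in the top-t list).\<close>
definition rnk :: "nat list \<Rightarrow> nat \<Rightarrow> nat" where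
  "rnk l Y = index l Y + 1"

definition rep_prefers :: "nat list \<Rightarrow> nat \<Rightarrow> nat \<Rightarrow> bool" where
  "rep_prefers l Y X \<longleftrightarrow> Y \<in> set l \<and> (X \<notin> set l \<or> rnk l Y < rnk l X)"

definition unit_sum_utils :: "nat \<Rightarrow> nat \<Rightarrow> (nat \<Rightarrow> nat \<Rightarrow> real) \<Rightarrow> bool" where
  "unit_sum_utils n m u \<longleftrightarrow> (\<forall>i<n. (\<forall>X<m. u i X \<ge> 0) \<and> (\<Sum>X<m. u i X) = 1)"

definition util_consistent :: "nat \<Rightarrow> nat \<Rightarrow> nat \<Rightarrow> (nat \<Rightarrow> nat list) \<Rightarrow> (nat \<Rightarrow> nat \<Rightarrow> real) \<Rightarrow> bool" where
  "util_consistent n m t \<sigma> u \<longleftrightarrow> unit_sum_utils n m u \<and>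
     (\<exists>\<rho>. extends_profile n m t \<sigma> \<rho> \<and>
        (\<forall>i<n. \<forall>X<m. \<forall>Y<m. prefers (\<rho> i) X Y \<longrightarrow> u i X \<ge> u i Y))"

definition SW :: "nat \<Rightarrow> (nat \<Rightarrow> nat \<Rightarrow> real) \<Rightarrow> nat \<Rightarrow> real" where
  "SW n u X = (\<Sum>i<n. u i X)"

text \<open>A pseudometric on agents (Inl i) and alternatives (Inr X).\<close>
definition pseudometric_on :: "(nat + nat) set \<Rightarrow> ((nat + nat) \<Rightarrow> (nat + nat) \<Rightarrow> real) \<Rightarrow> bool" where
  "pseudometric_on S d \<longleftrightarrow> (\<forall>x\<in>S. d x x = 0) \<and> (\<forall>x\<in>S. \<forall>y\<in>S. d x y \<ge> 0 \<and> d x y = d y x) \<and>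
     (\<forall>x\<in>S. \<forall>y\<in>S. \<forall>z\<in>S. d x z \<le> d x y + d y z)"

definition metric_consistent :: "nat \<Rightarrow> nat \<Rightarrow> nat \<Rightarrow> (nat \<Rightarrow> nat list) \<Rightarrow> ((nat + nat) \<Rightarrow> (nat + nat) \<Rightarrow> real) \<Rightarrow> bool" where
  "metric_consistent n m t \<sigma> d \<longleftrightarrow> pseudometric_on (Inl ` {0..<n} \<union> Inr ` {0..<m}) d \<and>
     (\<exists>\<rho>. extends_profile n m t \<sigma> \<rho> \<and>
        (\<forall>i<n. \<forall>X<m. \<forall>Y<m. prefers (\<rho> i) X Y \<longrightarrow> d (Inl i) (Inr X) \<le> d (Inl i) (Inr Y)))"

definition SC :: "nat \<Rightarrow> ((nat + nat) \<Rightarrow> (nat + nat) \<Rightarrow> real) \<Rightarrow> nat \<Rightarrow> real" where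
  "SC n d X = (\<Sum>i<n. d (Inl i) (Inr X))"

definition det_rule :: "nat \<Rightarrow> nat \<Rightarrow> nat \<Rightarrow> ((nat \<Rightarrow> nat list) \<Rightarrow> nat) \<Rightarrow> bool" where
  "det_rule n m t g \<longleftrightarrow> (\<forall>\<sigma>. top_profile n m t \<sigma> \<longrightarrow> g \<sigma> < m)"

text \<open>Metric distortion of g is at most c (sup of SC(g)/SC(X) \<le> c, written multiplicatively).\<close>
definition metric_distortion_le :: "nat \<Rightarrow> nat \<Rightarrow> nat \<Rightarrow> ((nat \<Rightarrow> nat list) \<Rightarrow> nat) \<Rightarrow> real \<Rightarrow> bool" where
  "metric_distortion_le n m t g c \<longleftrightarrow>
     (\<forall>\<sigma> d. top_profile n m t \<sigma> \<longrightarrow> metric_consistent n m t \<sigma> d \<longrightarrow>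
        (\<forall>X<m. SC n d (g \<sigma>) \<le> c * SC n d X))"

definition TH_p :: "nat \<Rightarrow> ((nat \<Rightarrow> nat list) \<Rightarrow> nat) \<Rightarrow> (nat \<Rightarrow> nat list) \<Rightarrow> nat \<Rightarrow> nat \<Rightarrow> real" where
  "TH_p t g \<sigma> i Y =
     (let Xh = g \<sigma>; l = \<sigma> i in
      if rep_prefers l Y Xh then 1 / (2 * harm t * real (rnk l Y))
      else if Y = Xh then
        1 - (\<Sum>Z\<in>{Z\<in>set l. rep_prefers l Z Xh}. 1 / (2 * harm t * real (rnk l Z)))
      else 0)"

text \<open>Probability that the rule outputs Y: uniform agent i, then Y w.p. TH_p.\<close>
definition TH_prob :: "nat \<Rightarrow> nat \<Rightarrow> ((nat \<Rightarrow> nat list) \<Rightarrow> nat) \<Rightarrow> (nat \<Rightarrow> nat list) \<Rightarrow> nat \<Rightarrow> real" where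
  "TH_prob n t g \<sigma> Y = (\<Sum>i<n. TH_p t g \<sigma> i Y) / real n"

definition TH_expected_SW :: "nat \<Rightarrow> nat \<Rightarrow> nat \<Rightarrow> ((nat \<Rightarrow> nat list) \<Rightarrow> nat) \<Rightarrow> (nat \<Rightarrow> nat list) \<Rightarrow> (nat \<Rightarrow> nat \<Rightarrow> real) \<Rightarrow> real" where
  "TH_expected_SW n m t g \<sigma> u = (\<Sum>Y<m. TH_prob n t g \<sigma> Y * SW n u Y)"

end

theory Submission
  imports Defs
begin

text \<open>Write \<open>X\<^sub>0 = g \<sigma>\<close>, \<open>H = harm t\<close>, \<open>P(X)\<close> for the probability that the rule outputs
  \<open>X\<close>, and \<open>E\<close> for its expected welfare. Whichever agent \<open>i\<close> is drawn, the rule outputs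
  \<open>X\<^sub>0\<close> with probability at least \<open>1/2\<close>, so \<open>SW X\<^sub>0 \<le> 2E\<close>; and it outputs an alternative \<open>Y\<close>
  that \<open>i\<close> reports above \<open>X\<^sub>0\<close> with probability \<open>1/(2H r\<^sub>i(Y)) \<ge> u\<^sub>i(Y)/(2H)\<close>, since a unit-sum utility consistent with the ranking
  has \<open>u\<^sub>i(Y) r\<^sub>i(Y) \<le> 1\<close>. Let \<open>\<beta>\<^sub>i\<close> be the utility agent \<open>i\<close> puts on the alternatives she
  reports above \<open>X\<^sub>0\<close> and \<open>\<theta> = \<Sum>\<^sub>i \<beta>\<^sub>i\<close>. Then \<open>SW X \<le> SW X\<^sub>0 + \<theta>/t + 2Hn P(X)\<close>;
  Cauchy--Schwarz over the alternatives gives \<open>\<theta>\<^sup>2 \<le> 2Hnm E\<close> and, applied to the agents' top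
  choices, \<open>n \<le> 2Hm\<^sup>2 E\<close>; and each agent has \<open>1 \<le> (m/t) \<beta>\<^sub>i + m u\<^sub>i(X\<^sub>0)\<close>. Balancing these
  estimates yields \<open>SW X \<le> 8 (m \<surd>m H / t) E\<close>.\<close>

lemma index_less_length: "x \<in> set l \<Longrightarrow> index l x < length l"
  by (induction l) auto

lemma nth_index: "x \<in> set l \<Longrightarrow> l ! index l x = x"
  by (induction l) auto

lemma index_le_length: "index l x \<le> length l"
  by (induction l) auto

lemma index_nth: "distinct l \<Longrightarrow> j < length l \<Longrightarrow> index l (l ! j) = j"
proof (induction l arbitrary: j)
  case (Cons a l)
  then show ?case by (cases j) (auto simp: nth_mem)
qed simp

lemma in_set_take_iff_index: "x \<in> set l \<Longrightarrow> x \<in> set (take t l) \<longleftrightarrow> index l x < t"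
proof (induction l arbitrary: t)
  case (Cons a l)
  then show ?case by (cases t) auto
qed simp

lemma index_take: "x \<in> set l \<Longrightarrow> index l x < t \<Longrightarrow> index (take t l) x = index l x"
proof (induction l arbitrary: t)
  case (Cons a l)
  then show ?case by (cases t) auto
qed simp

lemma antitone_prefix_average:
  fixes a :: "nat \<Rightarrow> real"
  assumes anti: "\<And>j k. j \<le> k \<Longrightarrow> k < m \<Longrightarrow> a k \<le> a j" and k: "1 \<le> k" "k \<le> m"
  shows "real k * (\<Sum>j<m. a j) \<le> real m * (\<Sum>j<k. a j)"
proof -
  \<comment> \<open>the last prefix term separates the prefix (each term above it) from the suffix (each below)\<close>
  define b where "b = a (k - 1)"
  have prefix: "real k * b \<le> (\<Sum>j<k. a j)"
  proof -
    have "(\<Sum>j<k. b) \<le> (\<Sum>j<k. a j)"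
      using anti k by (intro sum_mono) (auto simp: b_def)
    then show ?thesis by simp
  qed
  have suffix: "(\<Sum>j\<in>{k..<m}. a j) \<le> real (m - k) * b"
  proof -
    have "(\<Sum>j\<in>{k..<m}. a j) \<le> (\<Sum>j\<in>{k..<m}. b)"
      using anti k by (intro sum_mono) (auto simp: b_def)
    then show ?thesis by simp
  qed
  have split: "(\<Sum>j<m. a j) = (\<Sum>j<k. a j) + (\<Sum>j\<in>{k..<m}. a j)"
    using k by (metis atLeast0LessThan sum.atLeastLessThan_concat zero_le)
  have "real k * (\<Sum>j<m. a j) \<le> real k * (\<Sum>j<k. a j) + real k * (real (m - k) * b)"
    using split suffix k by (simp add: distrib_left)
  also have "\<dots> \<le> real k * (\<Sum>j<k. a j) + real (m - k) * (\<Sum>j<k. a j)"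
    using mult_left_mono[OF prefix, of "real (m - k)"] by (simp add: mult.left_commute)
  finally show ?thesis
    using k by (simp add: of_nat_diff algebra_simps)
qed

locale ranked_agent =
  fixes m :: nat and l :: "nat list" and v :: "nat \<Rightarrow> real"
  assumes full_ranking: "full_ranking m l"
    and utility_nonneg: "\<And>Y. Y < m \<Longrightarrow> 0 \<le> v Y"
    and utility_sum: "(\<Sum>Y<m. v Y) = 1"
    and utility_monotone: "\<And>X Y. X < m \<Longrightarrow> Y < m \<Longrightarrow> prefers l X Y \<Longrightarrow> v Y \<le> v X"
begin

lemma distinct: "distinct l"
  using full_ranking by (simp add: full_ranking_def)

lemma set_eq: "set l = {..<m}"
  using full_ranking by (simp add: full_ranking_def atLeast0LessThan)

lemma length_eq: "length l = m"
  using distinct_card[OF distinct] by (simp add: set_eq)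

lemma nth_less: "j < m \<Longrightarrow> l ! j < m"
  using nth_mem[of j l] by (simp add: length_eq set_eq)

lemma index_less: "Y < m \<Longrightarrow> index l Y < m"
  using index_less_length[of Y l] by (simp add: length_eq set_eq)

lemma nth_index_eq: "Y < m \<Longrightarrow> l ! index l Y = Y"
  by (simp add: nth_index set_eq)

lemma index_nth_eq: "j < m \<Longrightarrow> index l (l ! j) = j"
  by (simp add: index_nth distinct length_eq)

lemma sum_by_position: "(\<Sum>Y<m. f Y) = (\<Sum>j<m. f (l ! j))"
proof -
  have "(\<Sum>Y<m. f Y) = sum_list (map f l)"
    using sum.distinct_set_conv_list[OF distinct, of f] by (simp add: set_eq)
  also have "\<dots> = (\<Sum>j<m. f (l ! j))"
    by (simp add: sum_list_sum_nth length_eq atLeast0LessThan)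
  finally show ?thesis .
qed

lemma utility_antitone:
  assumes "j \<le> k" "k < m" shows "v (l ! k) \<le> v (l ! j)"
proof (cases "j = k")
  case False
  then have "prefers l (l ! j) (l ! k)"
    using assms by (simp add: prefers_def index_nth_eq length_eq)
  then show ?thesis
    using assms by (simp add: utility_monotone nth_less)
qed simp

lemma utility_position_sum: "(\<Sum>j<m. v (l ! j)) = 1"
  using utility_sum sum_by_position[of v] by simp

lemma utility_times_rank_le_one:
  assumes "Y < m" shows "v Y * real (index l Y + 1) \<le> 1"
proof -
  define p where "p = index l Y"
  have p: "p < m" "l ! p = Y"
    using assms by (simp_all add: p_def index_less nth_index_eq)
  have "v Y * real (p + 1) = (\<Sum>j<Suc p. v Y)"
    by simp
  also have "\<dots> \<le> (\<Sum>j<Suc p. v (l ! j))"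
    using p utility_antitone by (intro sum_mono) fastforce
  also have "\<dots> \<le> (\<Sum>j<m. v (l ! j))"
    using p nth_less utility_nonneg by (intro sum_mono2) auto
  finally show ?thesis
    by (simp add: utility_position_sum p_def)
qed

lemma one_le_top_utility: "0 < m \<Longrightarrow> 1 \<le> real m * v (l ! 0)"
  using antitone_prefix_average[of m "\<lambda>j. v (l ! j)" 1] utility_antitone
  by (simp add: utility_position_sum)

definition mass_above :: "nat \<Rightarrow> nat \<Rightarrow> real" where
  "mass_above t X = (\<Sum>j < min t (index l X). v (l ! j))"

lemma reported_above_iff:
  assumes "Y < m" "X < m"
  shows "rep_prefers (take t l) Y X \<longleftrightarrow> index l Y < min t (index l X)"
  using in_set_take_iff_index[of Y l t] in_set_take_iff_index[of X l t]
    index_take[of Y l t] index_take[of X l t] assms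
  by (auto simp: rep_prefers_def rnk_def set_eq)

lemma rnk_take: "Y < m \<Longrightarrow> index l Y < t \<Longrightarrow> rnk (take t l) Y = index l Y + 1"
  by (simp add: rnk_def index_take set_eq)

lemma mass_above_eq_sum:
  "mass_above t X = (\<Sum>Y<m. if index l Y < min t (index l X) then v Y else 0)"
proof -
  define k where "k = min t (index l X)"
  have k: "k \<le> m"
    using index_le_length[of l X] by (simp add: k_def length_eq)
  have "(\<Sum>Y<m. if index l Y < k then v Y else 0) = (\<Sum>j<m. if j < k then v (l ! j) else 0)"
    by (simp add: sum_by_position[of "\<lambda>Y. if index l Y < k then v Y else 0"] index_nth_eq)
  also have "\<dots> = sum (\<lambda>j. v (l ! j)) ({..<m} \<inter> {j. j < k})"
    by (simp add: sum.inter_restrict)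
  also have "{..<m} \<inter> {j. j < k} = {..<k}"
    using k by auto
  finally show ?thesis
    by (simp add: mass_above_def k_def)
qed

lemma mass_above_nonneg: "0 \<le> mass_above t X"
  unfolding mass_above_eq_sum using utility_nonneg by (intro sum_nonneg) auto

lemma one_le_mass_above_plus_utility:
  assumes t: "1 \<le> t" "t \<le> m" and X: "X < m"
  shows "1 \<le> real m / real t * mass_above t X + real m * v X"
proof (cases "index l X < t")
  case True
  define q where "q = index l X"
  have q: "q < m" "l ! q = X" "mass_above t X = (\<Sum>j<q. v (l ! j))"
    using True X by (simp_all add: q_def index_less nth_index_eq mass_above_def)
  have "1 = mass_above t X + (\<Sum>j\<in>{q..<m}. v (l ! j))"
    using q utility_position_sum by (metis atLeast0LessThan sum.atLeastLessThan_concat less_imp_le zero_le)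
  also have "(\<Sum>j\<in>{q..<m}. v (l ! j)) \<le> (\<Sum>j\<in>{q..<m}. v X)"
    using q utility_antitone by (intro sum_mono) fastforce
  also have "\<dots> \<le> real m * v X"
    using utility_nonneg[OF X] by (simp add: mult_right_mono)
  also have "mass_above t X \<le> real m / real t * mass_above t X"
    using t mult_right_mono[of "real t" "real m", OF _ mass_above_nonneg[of t X]]
    by (simp add: divide_simps mult.commute)
  finally show ?thesis
    by simp
next
  case False
  then have "mass_above t X = (\<Sum>j<t. v (l ! j))"
    by (simp add: mass_above_def)
  then have "real t \<le> real m * mass_above t X"
    using antitone_prefix_average[of m "\<lambda>j. v (l ! j)" t] utility_antitone t
    by (simp add: utility_position_sum)
  then have "1 \<le> real m / real t * mass_above t X"
    using t by (simp add: field_simps)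
  then show ?thesis
    using utility_nonneg[OF X] by (simp add: add_increasing2)
qed

text \<open>An alternative reported above \<open>X\<close> is paid for by the rule's sampling; one ranked
  below \<open>X\<close> is bounded by \<open>v X\<close>; and an unreported one ranked above \<open>X\<close> is
  dominated by each of the \<open>t\<close> reported alternatives, hence by their average.\<close>
lemma utility_le_mass_above:
  assumes t: "1 \<le> t" and Y: "Y < m" and X: "X < m"
  shows "v Y \<le> v X + mass_above t X / real t + (if index l Y < min t (index l X) then v Y else 0)"
proof -
  have nonneg: "0 \<le> v X" "0 \<le> mass_above t X / real t"
    using utility_nonneg[OF X] mass_above_nonneg[of t X] by simp_all
  consider "index l Y < min t (index l X)" | "v Y \<le> v X"
    | "\<not> index l Y < min t (index l X)" "v X < v Y"
    by linarith
  then show ?thesis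
  proof cases
    case 3
    have "index l Y < index l X"
      using 3 utility_antitone[of "index l X" "index l Y"] Y X
      by (metis index_less linorder_not_less nth_index_eq)
    then have "t \<le> index l Y" and mass: "mass_above t X = (\<Sum>j<t. v (l ! j))"
      using 3 by (simp_all add: mass_above_def)
    then have "(\<Sum>j<t. v Y) \<le> mass_above t X"
      unfolding mass using utility_antitone[of _ "index l Y"] Y
      by (intro sum_mono) (simp add: index_less nth_index_eq)
    then have "v Y \<le> mass_above t X / real t"
      using t by (simp add: field_simps)
    then show ?thesis
      using 3 nonneg by simp
  qed (use nonneg in auto)
qed

end

lemma sum_harmonic_weights:
  assumes "distinct l" "length l = t" "1 \<le> t"
  shows "(\<Sum>Z\<in>set l. 1 / (2 * harm t * real (rnk l Z))) = 1 / 2"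
proof -
  have "(\<Sum>Z\<in>set l. 1 / (2 * harm t * real (rnk l Z)))
      = (\<Sum>j<t. 1 / (2 * harm t * real (rnk l (l ! j))))"
    using assms by (simp add: sum.distinct_set_conv_list sum_list_sum_nth atLeast0LessThan)
  also have "\<dots> = (\<Sum>j<t. inverse (real (Suc j))) / (2 * harm t)"
    using assms by (simp add: rnk_def index_nth sum_divide_distrib field_simps)
  also have "\<dots> = 1 / 2"
    using assms harm_pos[of t, where 'a = real] by (simp add: harm_altdef)
  finally show ?thesis .
qed

lemma TH_p_reported_above:
  "rep_prefers (\<sigma> i) Y (g \<sigma>) \<Longrightarrow> TH_p t g \<sigma> i Y = 1 / (2 * harm t * real (rnk (\<sigma> i) Y))"
  by (simp add: TH_p_def)

lemma
  assumes "distinct (\<sigma> i)" "length (\<sigma> i) = t" "1 \<le> t"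
  shows TH_p_winner_ge_half: "1 / 2 \<le> TH_p t g \<sigma> i (g \<sigma>)"
    and TH_p_nonneg: "0 \<le> TH_p t g \<sigma> i Y"
proof -
  have "(\<Sum>Z\<in>{Z\<in>set (\<sigma> i). rep_prefers (\<sigma> i) Z (g \<sigma>)}. 1 / (2 * harm t * real (rnk (\<sigma> i) Z)))
      \<le> (\<Sum>Z\<in>set (\<sigma> i). 1 / (2 * harm t * real (rnk (\<sigma> i) Z)))"
    by (intro sum_mono2) (auto intro: harm_nonneg mult_nonneg_nonneg)
  then show half: "1 / 2 \<le> TH_p t g \<sigma> i (g \<sigma>)"
    using sum_harmonic_weights[OF assms] by (simp add: TH_p_def Let_def rep_prefers_def)
  show "0 \<le> TH_p t g \<sigma> i Y"
    using half by (auto simp: TH_p_def Let_def intro: harm_nonneg mult_nonneg_nonneg)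
qed

text \<open>Here \<open>S = SW X\<close>, \<open>s = SW X\<^sub>0\<close>, \<open>w = \<theta>\<close>, \<open>y = 2Hn P(X)\<close>. The \<open>\<surd>m\<close> enters when
  \<open>y\<close> dominates: then \<open>S\<^sup>2 \<le> 4HnE\<close>, while \<open>n t\<^sup>2 \<le> 8Hm\<^sup>3E\<close>.\<close>
lemma distortion_estimate_algebra:
  fixes S s w y E n m t H :: real
  assumes n: "0 < n" and t: "1 \<le> t" "t \<le> m" and H: "1 \<le> H"
    and nonneg: "0 \<le> S" "0 \<le> s" "0 \<le> w" "0 \<le> y" "0 \<le> E"
    and winner: "s \<le> 2 * E"
    and sampled: "y * S \<le> 2 * H * n * E"
    and mass: "w\<^sup>2 \<le> 2 * H * n * m * E"
    and agents: "n \<le> 2 * H * m\<^sup>2 * E"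
    and agents_split: "n \<le> m / t * w + m * s"
    and welfare: "S \<le> s + w / t + y"
  shows "S \<le> 8 * (m * sqrt m * H / t) * E"
proof -
  define K where "K = m * sqrt m * H / t"
  have m: "0 < m"
    using t by simp
  have sqrt_m: "1 \<le> sqrt m" "(sqrt m)\<^sup>2 = m"
    using t by simp_all
  have "m * 1 \<le> m * sqrt m"
    using m sqrt_m by (intro mult_left_mono) auto
  moreover have "m * sqrt m * 1 \<le> m * sqrt m * H"
    using m H by (intro mult_left_mono) auto
  ultimately have "t \<le> m * sqrt m * H"
    using t by linarith
  then have K_ge: "1 \<le> K"
    using t by (simp add: K_def)
  have K_sq: "(K * t)\<^sup>2 = H\<^sup>2 * m ^ 3"
    using t sqrt_m by (simp add: K_def power_mult_distrib power3_eq_cube power2_eq_square)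
  have "w\<^sup>2 \<le> 2 * H * m * E * (2 * H * m\<^sup>2 * E)"
    using mass mult_left_mono[OF agents, of "2 * H * m * E"] H m nonneg by (simp add: ac_simps)
  also have "\<dots> = 4 * (K * t)\<^sup>2 * E\<^sup>2"
    unfolding K_sq by (simp add: power2_eq_square power3_eq_cube)
  also have "\<dots> = (2 * K * t * E)\<^sup>2"
    by (simp add: power_mult_distrib)
  finally have "w \<le> 2 * K * t * E"
    by (rule power2_le_imp_le) (use nonneg K_ge t in simp)
  then have "w / t \<le> 2 * K * t * E / t"
    using t by (intro divide_right_mono) simp_all
  then have w: "w / t \<le> 2 * K * E"
    using t by simp
  have agents_t: "n * t\<^sup>2 \<le> 8 * H * m ^ 3 * E"
  proof (cases "n \<le> 2 * m * s")
    case True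
    have "2 * m * s \<le> 2 * m * (2 * E)"
      using winner m by (intro mult_left_mono) auto
    with True have n_le: "n \<le> 4 * m * E"
      by linarith
    have "t\<^sup>2 \<le> 1 * m\<^sup>2"
      using t by (simp add: power_mono)
    also have "\<dots> \<le> 2 * H * m\<^sup>2"
      using H by (intro mult_right_mono) auto
    finally have "n * t\<^sup>2 \<le> 4 * m * E * (2 * H * m\<^sup>2)"
      using n_le n nonneg m by (intro mult_mono) auto
    then show ?thesis
      by (simp add: power2_eq_square power3_eq_cube ac_simps)
  next
    case False
    then have "n \<le> 2 * (m / t * w)"
      using agents_split by linarith
    then have "n * t \<le> 2 * m * w"
      using t by (simp add: field_simps)
    then have "(n * t)\<^sup>2 \<le> (2 * m * w)\<^sup>2"
      using n t by (intro power_mono) auto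
    also have "\<dots> = 4 * m\<^sup>2 * w\<^sup>2"
      by (simp add: power_mult_distrib)
    also have "\<dots> \<le> 4 * m\<^sup>2 * (2 * H * n * m * E)"
      using mass by (intro mult_left_mono) simp_all
    finally have "n * (n * t\<^sup>2) \<le> n * (8 * H * m ^ 3 * E)"
      by (simp add: power2_eq_square power3_eq_cube ac_simps)
    then show ?thesis
      using n by simp
  qed
  have "S \<le> 8 * K * E"
  proof (cases "S \<le> 2 * y")
    case True
    then have "S * S \<le> 2 * y * S"
      using nonneg by (intro mult_right_mono) auto
    then have "S\<^sup>2 \<le> 4 * H * n * E"
      using sampled by (simp add: power2_eq_square)
    then have "S\<^sup>2 * t\<^sup>2 \<le> (4 * H * n * E) * t\<^sup>2"
      by (rule mult_right_mono) simp
    also have "\<dots> = 4 * H * E * (n * t\<^sup>2)"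
      by (simp add: ac_simps)
    also have "\<dots> \<le> 4 * H * E * (8 * H * m ^ 3 * E)"
      using agents_t H nonneg by (intro mult_left_mono) auto
    also have "\<dots> = 32 * (H\<^sup>2 * m ^ 3) * E\<^sup>2"
      by (simp add: power2_eq_square)
    also have "\<dots> = (32 * K\<^sup>2 * E\<^sup>2) * t\<^sup>2"
      by (simp add: flip: K_sq) (simp add: power_mult_distrib)
    finally have "S\<^sup>2 \<le> 32 * K\<^sup>2 * E\<^sup>2"
      by (rule mult_right_le_imp_le) (use t in simp)
    also have "\<dots> \<le> (8 * K * E)\<^sup>2"
      by (simp add: power_mult_distrib)
    finally show ?thesis
      by (rule power2_le_imp_le) (use nonneg K_ge in simp)
  next
    case False
    then have "S \<le> 4 * E + 4 * K * E"
      using welfare winner w by linarith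
    also have "\<dots> \<le> 8 * K * E"
      using mult_right_mono[OF K_ge nonneg(5)] by (simp add: mult.commute)
    finally show ?thesis .
  qed
  then show ?thesis
    by (simp add: K_def)
qed

locale truncated_harmonic_profile =
  fixes n m t :: nat and g :: "(nat \<Rightarrow> nat list) \<Rightarrow> nat" and \<sigma> \<rho> :: "nat \<Rightarrow> nat list"
    and u :: "nat \<Rightarrow> nat \<Rightarrow> real"
  assumes n_pos: "1 \<le> n" and t_pos: "1 \<le> t" and t_le_m: "t \<le> m"
    and winner_less: "g \<sigma> < m"
    and extends: "extends_profile n m t \<sigma> \<rho>"
    and unit_sum: "unit_sum_utils n m u"
    and consistent: "\<And>i X Y. i < n \<Longrightarrow> X < m \<Longrightarrow> Y < m \<Longrightarrow> prefers (\<rho> i) X Y \<Longrightarrow> u i Y \<le> u i X"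
begin

abbreviation H :: real where "H \<equiv> harm t"

abbreviation E :: real where "E \<equiv> TH_expected_SW n m t g \<sigma> u"

abbreviation mass :: "nat \<Rightarrow> real" where
  "mass i \<equiv> ranked_agent.mass_above (\<rho> i) (u i) t (g \<sigma>)"

abbreviation above :: "nat \<Rightarrow> nat \<Rightarrow> bool" where
  "above i Y \<equiv> index (\<rho> i) Y < min t (index (\<rho> i) (g \<sigma>))"

lemma agent: "i < n \<Longrightarrow> ranked_agent m (\<rho> i) (u i)"
  using extends unit_sum consistent
  by (simp add: ranked_agent_def extends_profile_def unit_sum_utils_def)

lemma reported_eq: "i < n \<Longrightarrow> \<sigma> i = take t (\<rho> i)"
  using extends by (simp add: extends_profile_def)

lemma reported_list: "i < n \<Longrightarrow> distinct (\<sigma> i) \<and> length (\<sigma> i) = t"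
  using ranked_agent.distinct[OF agent] ranked_agent.length_eq[OF agent] t_le_m
  by (simp add: reported_eq)

lemma H_pos: "0 < H"
  using t_pos by simp

lemma H_ge_one: "1 \<le> H"
  using harm_mono[of 1 t, where 'a = real] t_pos by (simp add: harm_def)

lemma TH_p_above:
  assumes i: "i < n" and Y: "Y < m" and "above i Y"
  shows "2 * H * TH_p t g \<sigma> i Y = 1 / real (index (\<rho> i) Y + 1)"
proof -
  interpret ranked_agent m "\<rho> i" "u i" using agent[OF i] .
  have "rep_prefers (\<sigma> i) Y (g \<sigma>)" and "rnk (\<sigma> i) Y = index (\<rho> i) Y + 1"
    using assms reported_above_iff winner_less rnk_take by (simp_all add: reported_eq)
  then show ?thesis
    using H_pos by (simp add: TH_p_reported_above del: harm_pos_iff)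
qed

lemma utility_le_TH_p:
  assumes i: "i < n" and Y: "Y < m" and "above i Y"
  shows "u i Y \<le> 2 * H * TH_p t g \<sigma> i Y"
  using ranked_agent.utility_times_rank_le_one[OF agent[OF i] Y] TH_p_above[OF assms]
  by (simp add: pos_le_divide_eq del: of_nat_Suc)

lemma one_le_TH_p_top:
  assumes i: "i < n" shows "1 \<le> 2 * H * TH_p t g \<sigma> i (\<rho> i ! 0)"
proof -
  interpret ranked_agent m "\<rho> i" "u i" using agent[OF i] .
  have m: "0 < m"
    using t_pos t_le_m by simp
  show ?thesis
  proof (cases "\<rho> i ! 0 = g \<sigma>")
    case True
    have "1 / 2 \<le> TH_p t g \<sigma> i (g \<sigma>)"
      using TH_p_winner_ge_half reported_list[OF i] t_pos by blast
    then have "1 \<le> 2 * 1 * TH_p t g \<sigma> i (g \<sigma>)"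
      by simp
    also have "\<dots> \<le> 2 * H * TH_p t g \<sigma> i (g \<sigma>)"
      using H_ge_one \<open>1 / 2 \<le> TH_p t g \<sigma> i (g \<sigma>)\<close> by (intro mult_right_mono mult_left_mono) simp_all
    finally show ?thesis
      using True by simp
  next
    case False
    then have "index (\<rho> i) (g \<sigma>) \<noteq> 0"
      using nth_index_eq[OF winner_less] by (metis (mono_tags))
    then have "above i (\<rho> i ! 0)"
      using t_pos by (simp add: index_nth_eq[OF m])
    then show ?thesis
      using TH_p_above[OF i nth_less[OF m]] index_nth_eq[OF m] by simp
  qed
qed

lemma TH_prob_nonneg: "0 \<le> TH_prob n t g \<sigma> Y"
  unfolding TH_prob_def using TH_p_nonneg reported_list t_pos
  by (intro divide_nonneg_nonneg sum_nonneg) auto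

lemma SW_nonneg: "Y < m \<Longrightarrow> 0 \<le> SW n u Y"
  using unit_sum unfolding SW_def unit_sum_utils_def by (intro sum_nonneg) auto

lemma TH_prob_SW_le_expected: "Y < m \<Longrightarrow> TH_prob n t g \<sigma> Y * SW n u Y \<le> E"
  unfolding TH_expected_SW_def using TH_prob_nonneg SW_nonneg
  by (intro member_le_sum) auto

lemma SW_winner_le: "SW n u (g \<sigma>) \<le> 2 * E"
proof -
  have "(\<Sum>i<n. 1 / 2) \<le> (\<Sum>i<n. TH_p t g \<sigma> i (g \<sigma>))"
    using TH_p_winner_ge_half reported_list t_pos by (intro sum_mono) auto
  then have "1 / 2 \<le> TH_prob n t g \<sigma> (g \<sigma>)"
    using n_pos by (simp add: TH_prob_def field_simps)
  then have "1 / 2 * SW n u (g \<sigma>) \<le> E"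
    using TH_prob_SW_le_expected[OF winner_less] SW_nonneg[OF winner_less]
    by (meson mult_right_mono order_trans)
  then show ?thesis
    by simp
qed

text \<open>Cauchy--Schwarz over the alternatives, for any weights \<open>w\<close> that are both sampled by the
  rule and valued by the agents.\<close>
lemma weighted_welfare_bound:
  assumes c: "0 \<le> c"
    and w: "\<And>i Y. i < n \<Longrightarrow> Y < m \<Longrightarrow>
      0 \<le> w i Y \<and> w i Y \<le> 2 * H * TH_p t g \<sigma> i Y \<and> c * w i Y \<le> u i Y"
  shows "c * (\<Sum>i<n. \<Sum>Y<m. w i Y)\<^sup>2 \<le> 2 * H * real n * real m * E"
proof -
  define W where "W Y = (\<Sum>i<n. w i Y)" for Y
  have W_nonneg: "0 \<le> W Y" if "Y < m" for Y
    unfolding W_def using w that by (intro sum_nonneg) auto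
  have sampled: "W Y \<le> 2 * H * real n * TH_prob n t g \<sigma> Y" if "Y < m" for Y
  proof -
    have "W Y \<le> (\<Sum>i<n. 2 * H * TH_p t g \<sigma> i Y)"
      unfolding W_def using w that by (intro sum_mono) auto
    also have "\<dots> = 2 * H * real n * TH_prob n t g \<sigma> Y"
      using n_pos by (simp add: TH_prob_def sum_distrib_left[symmetric])
    finally show ?thesis .
  qed
  have valued: "c * W Y \<le> SW n u Y" if "Y < m" for Y
    unfolding W_def SW_def sum_distrib_left using w that by (intro sum_mono) auto
  have "c * (\<Sum>i<n. \<Sum>Y<m. w i Y)\<^sup>2 = c * (\<Sum>Y<m. W Y)\<^sup>2"
    unfolding W_def by (simp add: sum.swap[of _ "{..<n}"])
  also have "\<dots> \<le> c * ((\<Sum>Y<m. (W Y)\<^sup>2) * real m)"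
    using sum_squared_le_sum_of_squares[of W "{..<m}"] c by (simp add: mult_left_mono)
  also have "\<dots> = real m * (\<Sum>Y<m. W Y * (c * W Y))"
    by (simp add: sum_distrib_left power2_eq_square ac_simps)
  also have "\<dots> \<le> real m * (\<Sum>Y<m. (2 * H * real n * TH_prob n t g \<sigma> Y) * SW n u Y)"
    using sampled valued W_nonneg c
    by (intro mult_left_mono sum_mono mult_mono) (auto intro!: mult_nonneg_nonneg harm_nonneg TH_prob_nonneg)
  also have "\<dots> = 2 * H * real n * real m * E"
    by (simp add: TH_expected_SW_def sum_distrib_left ac_simps)
  finally show ?thesis .
qed

lemma TH_p_agent_nonneg: "i < n \<Longrightarrow> 0 \<le> 2 * H * TH_p t g \<sigma> i Y"
  using TH_p_nonneg reported_list t_pos by (simp add: harm_nonneg)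

lemma utility_nonneg: "i < n \<Longrightarrow> Y < m \<Longrightarrow> 0 \<le> u i Y"
  using unit_sum by (simp add: unit_sum_utils_def)

lemma mass_sq_le_expected: "(\<Sum>i<n. mass i)\<^sup>2 \<le> 2 * H * real n * real m * E"
proof -
  have "(\<Sum>i<n. \<Sum>Y<m. if above i Y then u i Y else 0) = (\<Sum>i<n. mass i)"
    using ranked_agent.mass_above_eq_sum[OF agent] by simp
  moreover have "1 * (\<Sum>i<n. \<Sum>Y<m. if above i Y then u i Y else 0)\<^sup>2 \<le> 2 * H * real n * real m * E"
    using utility_nonneg utility_le_TH_p TH_p_agent_nonneg
    by (intro weighted_welfare_bound) auto
  ultimately show ?thesis
    by simp
qed

lemma agents_le_expected: "real n \<le> 2 * H * (real m)\<^sup>2 * E"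
proof -
  have m: "0 < m"
    using t_pos t_le_m by simp
  have "(\<Sum>i<n. \<Sum>Y<m. if \<rho> i ! 0 = Y then 1 else 0 :: real) = real n"
    using ranked_agent.nth_less[OF agent m] by simp
  moreover have "1 / real m * (\<Sum>i<n. \<Sum>Y<m. if \<rho> i ! 0 = Y then 1 else 0 :: real)\<^sup>2
      \<le> 2 * H * real n * real m * E"
    using one_le_TH_p_top TH_p_agent_nonneg utility_nonneg
      ranked_agent.one_le_top_utility[OF agent m] m
    by (intro weighted_welfare_bound) (auto simp: field_simps)
  ultimately have "real n * real n \<le> real m * (2 * H * real n * real m * E)"
    using m by (simp add: power2_eq_square field_simps)
  then show ?thesis
    using n_pos by (simp add: power2_eq_square ac_simps)
qed

lemma agents_le_mass_winner: "real n \<le> real m / real t * (\<Sum>i<n. mass i) + real m * SW n u (g \<sigma>)"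
proof -
  have "(\<Sum>i<n. 1) \<le> (\<Sum>i<n. real m / real t * mass i + real m * u i (g \<sigma>))"
    using ranked_agent.one_le_mass_above_plus_utility[OF agent t_pos t_le_m winner_less]
    by (intro sum_mono) auto
  then show ?thesis
    by (simp add: SW_def sum.distrib sum_distrib_left)
qed

lemma SW_le_winner_mass_prob:
  assumes X: "X < m"
  shows "SW n u X \<le> SW n u (g \<sigma>) + (\<Sum>i<n. mass i) / real t + 2 * H * real n * TH_prob n t g \<sigma> X"
proof -
  have "SW n u X \<le> (\<Sum>i<n. u i (g \<sigma>) + mass i / real t + 2 * H * TH_p t g \<sigma> i X)"
    unfolding SW_def
  proof (intro sum_mono)
    fix i assume "i \<in> {..<n}"
    then have i: "i < n" by simp
    have "(if above i X then u i X else 0) \<le> 2 * H * TH_p t g \<sigma> i X"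
      using utility_le_TH_p[OF i X] TH_p_agent_nonneg[OF i] by auto
    then show "u i X \<le> u i (g \<sigma>) + mass i / real t + 2 * H * TH_p t g \<sigma> i X"
      using ranked_agent.utility_le_mass_above[OF agent[OF i] t_pos X winner_less] by linarith
  qed
  also have "\<dots> = SW n u (g \<sigma>) + (\<Sum>i<n. mass i) / real t + 2 * H * real n * TH_prob n t g \<sigma> X"
    using n_pos by (simp add: SW_def TH_prob_def sum.distrib sum_divide_distrib sum_distrib_left mult.assoc)
  finally show ?thesis .
qed

lemma SW_le_expected_SW:
  assumes X: "X < m"
  shows "SW n u X \<le> 8 * (real m * sqrt (real m) * H / real t) * E"
proof -
  have sampled: "2 * H * real n * TH_prob n t g \<sigma> X * SW n u X \<le> 2 * H * real n * E"
    using mult_left_mono[OF TH_prob_SW_le_expected[OF X], of "2 * H * real n"]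
    by (simp add: mult.assoc harm_nonneg)
  have "0 \<le> E"
    using TH_prob_SW_le_expected[OF winner_less] TH_prob_nonneg SW_nonneg[OF winner_less]
    by (meson mult_nonneg_nonneg order_trans)
  moreover have "0 \<le> (\<Sum>i<n. mass i)"
    using ranked_agent.mass_above_nonneg[OF agent] by (intro sum_nonneg) simp
  moreover have "0 \<le> 2 * H * real n * TH_prob n t g \<sigma> X"
    using TH_prob_nonneg by (simp add: harm_nonneg)
  ultimately show ?thesis
    using n_pos t_pos t_le_m H_ge_one SW_nonneg[OF X] SW_nonneg[OF winner_less]
    by (intro distortion_estimate_algebra[OF _ _ _ _ _ _ _ _ _ SW_winner_le sampled
          mass_sq_le_expected agents_le_expected agents_le_mass_winner SW_le_winner_mass_prob[OF X]])
      simp_all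
qed

end

theorem mainTheorem13:
  "\<exists>C::real. \<forall>n m t g \<sigma> u X.
     1 \<le> n \<longrightarrow> 1 \<le> t \<longrightarrow> t \<le> m \<longrightarrow>
     det_rule n m t g \<longrightarrow>
     metric_distortion_le n m t g (6 * real m / real t + 1) \<longrightarrow>
     top_profile n m t \<sigma> \<longrightarrow> util_consistent n m t \<sigma> u \<longrightarrow> X < m \<longrightarrow>
     SW n u X \<le> C * (real m * sqrt (real m) * harm t / real t) * TH_expected_SW n m t g \<sigma> u"
proof (intro exI[of _ 8] allI impI)
  fix n m t g \<sigma> u X
  assume n: "1 \<le> n" and t: "1 \<le> t" "t \<le> m" and "det_rule n m t g"
    and "top_profile n m t \<sigma>" and consistent: "util_consistent n m t \<sigma> u" and X: "X < m"
  then have winner: "g \<sigma> < m"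
    by (simp add: det_rule_def)
  obtain \<rho> where "extends_profile n m t \<sigma> \<rho>"
    and "\<And>i X Y. i < n \<Longrightarrow> X < m \<Longrightarrow> Y < m \<Longrightarrow> prefers (\<rho> i) X Y \<Longrightarrow> u i Y \<le> u i X"
    using consistent by (auto simp: util_consistent_def)
  then interpret truncated_harmonic_profile n m t g \<sigma> \<rho> u
    using n t winner consistent by unfold_locales (simp_all add: util_consistent_def)
  show "SW n u X \<le> 8 * (real m * sqrt (real m) * harm t / real t) * TH_expected_SW n m t g \<sigma> u"
    using SW_le_expected_SW[OF X] .
qed

end
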